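(* Let $(X,\to)$ be a transition system over $A$. For every congruence $R\subseteq\mathcal P(X)\times\mathcal P(X)$ and $X_1,X_2\subseteq X$: $(X_1,X_2)\in\beta_t(R)$ iff ($X_1=\emptyset\iff X_2=\emptyset$) and $\delta_a[X_1]\mathrel R\delta_a[X_2]$ for all $a\in A$. The restriction of $\beta_t$ to congruences is continuous, independent of the branching type of the transition system.
   Context: $\delta_a[Y]=\{x'\mid\exists y\in Y\colon y\xrightarrow{a}x'\}$; $\Diamond_a(S)=\{x\mid\exists x'\in S\colon x\xrightarrow{a}x'\}$. A congruence is an equivalence $R$ on $\mathcal P(X)$ with $X_i\mathrel RY_i$ ($i\in I$) implying $\bigcup_iX_i\mathrel R\bigcup_iY_i$. $\alpha_t(\mathcal S)=\{(X_1,X_2)\mid\forall S\in\mathcal S\colon(X_1\cap S\neq\emptyset\iff X_2\cap S\neq\emptyset)\}$, $\gamma_t(R)=\{S\subseteq X\mid\forall(X_1,X_2)\in R\colon(X_1\cap S\neq\emptyset\iff X_2\cap S\neq\emptyset)\}$, $\mathit{lo}_t(\mathcal S)=\bigcup_{a\in A}\{\Diamond_a(S)\mid S\in\mathcal S\}\cup\{X\}$, $\beta_t=\alpha_t\circ\mathit{lo}_t\circ\gamma_t$ on the lattice $(\mathit{Eq}(\mathcal P(X)),\supseteq)$ of equivalences on $\mathcal P(X)$; continuity means preservation of suprema (in this order, intersections) of well-ordered chains. *)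

theory Defs
  imports Main
begin

definition lts :: "'x set \<Rightarrow> 'a set \<Rightarrow> ('x \<times> 'a \<times> 'x) set \<Rightarrow> bool" where
  "lts X A T \<longleftrightarrow> T \<subseteq> X \<times> A \<times> X"

definition delta :: "('x \<times> 'a \<times> 'x) set \<Rightarrow> 'a \<Rightarrow> 'x set \<Rightarrow> 'x set" where
  "delta T a Y = {x'. \<exists>y\<in>Y. (y, a, x') \<in> T}"

definition diam :: "'x set \<Rightarrow> ('x \<times> 'a \<times> 'x) set \<Rightarrow> 'a \<Rightarrow> 'x set \<Rightarrow> 'x set" where
  "diam X T a S = {x \<in> X. \<exists>x'\<in>S. (x, a, x') \<in> T}"

text \<open>Congruence: equivalence on P(X) closed under arbitrary unions of related families
  (a family (X_i, Y_i), i \<in> I, is represented by the set of its pairs).\<close>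
definition congruence :: "'x set \<Rightarrow> ('x set \<times> 'x set) set \<Rightarrow> bool" where
  "congruence X R \<longleftrightarrow> equiv (Pow X) R \<and>
     (\<forall>P. P \<subseteq> R \<longrightarrow> (\<Union>(fst ` P), \<Union>(snd ` P)) \<in> R)"

definition alpha_t :: "'x set \<Rightarrow> 'x set set \<Rightarrow> ('x set \<times> 'x set) set" where
  "alpha_t X SS = {(X1, X2). X1 \<subseteq> X \<and> X2 \<subseteq> X \<and>
      (\<forall>S\<in>SS. (X1 \<inter> S \<noteq> {} \<longleftrightarrow> X2 \<inter> S \<noteq> {}))}"

definition gamma_t :: "'x set \<Rightarrow> ('x set \<times> 'x set) set \<Rightarrow> 'x set set" where
  "gamma_t X R = {S. S \<subseteq> X \<and>
      (\<forall>(X1, X2)\<in>R. (X1 \<inter> S \<noteq> {} \<longleftrightarrow> X2 \<inter> S \<noteq> {}))}"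

definition lo_t :: "'x set \<Rightarrow> 'a set \<Rightarrow> ('x \<times> 'a \<times> 'x) set \<Rightarrow> 'x set set \<Rightarrow> 'x set set" where
  "lo_t X A T SS = (\<Union>a\<in>A. {diam X T a S | S. S \<in> SS}) \<union> {X}"

definition beta_t :: "'x set \<Rightarrow> 'a set \<Rightarrow> ('x \<times> 'a \<times> 'x) set
      \<Rightarrow> ('x set \<times> 'x set) set \<Rightarrow> ('x set \<times> 'x set) set" where
  "beta_t X A T R = alpha_t X (lo_t X A T (gamma_t X R))"

text \<open>Well-ordered chain w.r.t. the lattice order \<supseteq>: every nonempty subfamily has a
  least element in the order \<supseteq>, i.e. a largest set.\<close>
definition wo_chain_sup :: "('x set \<times> 'x set) set set \<Rightarrow> bool" where
  "wo_chain_sup C \<longleftrightarrow> (\<forall>R1\<in>C. \<forall>R2\<in>C. R1 \<subseteq> R2 \<or> R2 \<subseteq> R1) \<and>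
     (\<forall>D. D \<subseteq> C \<and> D \<noteq> {} \<longrightarrow> (\<exists>M\<in>D. \<forall>R\<in>D. R \<subseteq> M))"

end

theory Submission
  imports Defs
begin

text \<open>A congruence R is determined by the sets it separates. Each R-class has a largest
  element, the union of the class, and any two R-related sets either both meet its complement
  or both miss it, so that complement lies in gamma_t X R; testing against these complements
  gives alpha_t X (gamma_t X R) = R. As Y meets diam X T a S exactly when delta T a Y meets S,
  membership in beta_t X A T R reduces to the two stated conditions. These are pointwise in R,
  so beta_t commutes with every nonempty intersection of congruences.\<close>

lemma congruence_equiv: "congruence X R \<Longrightarrow> equiv (Pow X) R"
  unfolding congruence_def by blast

lemma congruence_subset: "congruence X R \<Longrightarrow> (Y1, Y2) \<in> R \<Longrightarrow> Y1 \<subseteq> X \<and> Y2 \<subseteq> X"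
  using equiv_type[OF congruence_equiv] by blast

lemma congruence_refl: "congruence X R \<Longrightarrow> Y \<subseteq> X \<Longrightarrow> (Y, Y) \<in> R"
  using congruence_equiv equiv_class_self by fastforce

lemma congruence_sym: "congruence X R \<Longrightarrow> (Y1, Y2) \<in> R \<Longrightarrow> (Y2, Y1) \<in> R"
  using congruence_equiv sym_def equiv_def by metis

lemma congruence_trans:
  "congruence X R \<Longrightarrow> (Y1, Y2) \<in> R \<Longrightarrow> (Y2, Y3) \<in> R \<Longrightarrow> (Y1, Y3) \<in> R"
  using congruence_equiv equiv_def transD by metis

lemma congruence_Union: "congruence X R \<Longrightarrow> P \<subseteq> R \<Longrightarrow> (\<Union>(fst ` P), \<Union>(snd ` P)) \<in> R"
  unfolding congruence_def by blast

lemma congruence_Un: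
  assumes "congruence X R" "(Y1, Y2) \<in> R" "(Z1, Z2) \<in> R"
  shows "(Y1 \<union> Z1, Y2 \<union> Z2) \<in> R"
  using congruence_Union[OF assms(1), of "{(Y1, Y2), (Z1, Z2)}"] assms(2,3) by simp

lemma congruence_Inter:
  assumes "C \<noteq> {}" and cong: "\<forall>R\<in>C. congruence X R"
  shows "congruence X (\<Inter>C)"
proof -
  have "equiv (Pow X) (\<Inter>C)"
  proof (rule equivI)
    obtain R where "R \<in> C" using assms(1) by blast
    then show "\<Inter>C \<subseteq> Pow X \<times> Pow X"
      using cong congruence_subset by fastforce
    show "refl_on (Pow X) (\<Inter>C)"
      by (rule refl_onI) (use cong congruence_refl in blast)
    show "sym (\<Inter>C)"
      by (rule symI) (use cong congruence_sym in blast)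
    show "trans (\<Inter>C)"
      by (rule transI) (use cong congruence_trans in blast)
  qed
  moreover have "(\<Union>(fst ` P), \<Union>(snd ` P)) \<in> \<Inter>C" if "P \<subseteq> \<Inter>C" for P
    using that cong congruence_Union by blast
  ultimately show ?thesis
    unfolding congruence_def by blast
qed

definition cong_top :: "('x set \<times> 'x set) set \<Rightarrow> 'x set \<Rightarrow> 'x set" where
  "cong_top R Y = \<Union>{Z. (Z, Y) \<in> R}"

lemma subset_cong_top: "(Z, Y) \<in> R \<Longrightarrow> Z \<subseteq> cong_top R Y"
  unfolding cong_top_def by blast

lemma cong_top_rel:
  assumes "congruence X R" and "Y \<subseteq> X"
  shows "(cong_top R Y, Y) \<in> R"
proof -
  let ?P = "{(Z, Y) | Z. (Z, Y) \<in> R}"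
  have "fst ` ?P = {Z. (Z, Y) \<in> R}" by force
  moreover have "snd ` ?P = {Y}"
    using congruence_refl[OF assms] by force
  moreover have "(\<Union>(fst ` ?P), \<Union>(snd ` ?P)) \<in> R"
    by (rule congruence_Union[OF assms(1)]) blast
  ultimately show ?thesis
    unfolding cong_top_def by simp
qed

lemma compl_cong_top_in_gamma_t:
  assumes c: "congruence X R" and "Y \<subseteq> X"
  shows "X - cong_top R Y \<in> gamma_t X R"
proof -
  let ?t = "cong_top R Y"
  have tY: "(?t, Y) \<in> R" using cong_top_rel[OF assms] .
  have below_top: "Z2 \<subseteq> ?t" if "(Z1, Z2) \<in> R" and "Z1 \<subseteq> ?t" for Z1 Z2
  proof -
    have "(Z1 \<union> ?t, Z2 \<union> ?t) \<in> R"
      using congruence_Un[OF c that(1) congruence_refl[OF c]] congruence_subset[OF c tY] by blast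
    then have "(Z2 \<union> ?t, Y) \<in> R"
      using that(2) tY congruence_sym[OF c] congruence_trans[OF c] Un_absorb1 by metis
    then show ?thesis using subset_cong_top by blast
  qed
  have "Z1 \<subseteq> ?t \<longleftrightarrow> Z2 \<subseteq> ?t" if "(Z1, Z2) \<in> R" for Z1 Z2
    using below_top that congruence_sym[OF c] by blast
  then show ?thesis
    unfolding gamma_t_def using congruence_subset[OF c] by fast
qed

lemma Un_rel_if_subset_cong_top:
  assumes c: "congruence X R" and "Y \<subseteq> X" "Z \<subseteq> X" "Z \<subseteq> cong_top R Y"
  shows "(Y \<union> Z, Y) \<in> R"
proof -
  have tY: "(cong_top R Y, Y) \<in> R" using cong_top_rel[OF c assms(2)] .
  have "(cong_top R Y \<union> Z, Y \<union> Z) \<in> R"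
    using congruence_Un[OF c tY congruence_refl[OF c assms(3)]] .
  then have "(cong_top R Y, Y \<union> Z) \<in> R"
    using assms(4) by (simp add: Un_absorb2)
  then show ?thesis
    using tY congruence_sym[OF c] congruence_trans[OF c] by blast
qed

lemma rel_if_agree_on_gamma_t:
  assumes c: "congruence X R" and y: "Y1 \<subseteq> X" "Y2 \<subseteq> X"
    and agree: "\<forall>S\<in>gamma_t X R. Y1 \<inter> S \<noteq> {} \<longleftrightarrow> Y2 \<inter> S \<noteq> {}"
  shows "(Y1, Y2) \<in> R"
proof -
  have Y_top: "Y \<subseteq> cong_top R Y" if "Y \<subseteq> X" for Y
    using subset_cong_top[OF congruence_refl[OF c that]] .
  have "Y1 \<inter> (X - cong_top R Y1) = {}" "Y2 \<inter> (X - cong_top R Y2) = {}"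
    using Y_top y by blast+
  then have "Y2 \<inter> (X - cong_top R Y1) = {}" "Y1 \<inter> (X - cong_top R Y2) = {}"
    using agree compl_cong_top_in_gamma_t[OF c] y by blast+
  then have "Y2 \<subseteq> cong_top R Y1" "Y1 \<subseteq> cong_top R Y2"
    using y by blast+
  then have "(Y1 \<union> Y2, Y1) \<in> R" "(Y1 \<union> Y2, Y2) \<in> R"
    using Un_rel_if_subset_cong_top[OF c] y by (metis Un_commute)+
  then show ?thesis
    using congruence_sym[OF c] congruence_trans[OF c] by blast
qed

lemma alpha_gamma_congruence:
  assumes c: "congruence X R"
  shows "alpha_t X (gamma_t X R) = R"
proof (intro set_eqI iffI)
  fix p assume "p \<in> alpha_t X (gamma_t X R)"
  then show "p \<in> R"
    unfolding alpha_t_def using rel_if_agree_on_gamma_t[OF c] by auto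
next
  fix p assume "p \<in> R"
  then show "p \<in> alpha_t X (gamma_t X R)"
    unfolding alpha_t_def gamma_t_def using congruence_subset[OF c] by auto
qed

lemma lts_delta_subset: "lts X A T \<Longrightarrow> delta T a Y \<subseteq> X"
  unfolding lts_def delta_def by blast

lemma Int_diam_eq_empty_iff:
  "Y \<subseteq> X \<Longrightarrow> Y \<inter> diam X T a S = {} \<longleftrightarrow> delta T a Y \<inter> S = {}"
  unfolding diam_def delta_def by blast

lemma ball_lo_t_iff:
  "(\<forall>S'\<in>lo_t X A T SS. P S') \<longleftrightarrow> P X \<and> (\<forall>a\<in>A. \<forall>S\<in>SS. P (diam X T a S))"
  unfolding lo_t_def by blast

lemma mem_alpha_lo_t_iff:
  assumes "lts X A T"
  shows "(X1, X2) \<in> alpha_t X (lo_t X A T SS) \<longleftrightarrow>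
    X1 \<subseteq> X \<and> X2 \<subseteq> X \<and> (X1 = {} \<longleftrightarrow> X2 = {}) \<and>
    (\<forall>a\<in>A. (delta T a X1, delta T a X2) \<in> alpha_t X SS)"
proof (cases "X1 \<subseteq> X \<and> X2 \<subseteq> X")
  case True
  then have "X1 \<subseteq> X" "X2 \<subseteq> X" "X1 \<inter> X = X1" "X2 \<inter> X = X2" by auto
  then show ?thesis
    unfolding alpha_t_def
    by (simp add: ball_lo_t_iff Int_diam_eq_empty_iff lts_delta_subset[OF assms])
next
  case False
  then show ?thesis unfolding alpha_t_def by auto
qed

lemma mem_beta_t_iff:
  assumes "lts X A T" and "congruence X R"
  shows "(X1, X2) \<in> beta_t X A T R \<longleftrightarrow>
    X1 \<subseteq> X \<and> X2 \<subseteq> X \<and> (X1 = {} \<longleftrightarrow> X2 = {}) \<and>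
    (\<forall>a\<in>A. (delta T a X1, delta T a X2) \<in> R)"
  unfolding beta_t_def mem_alpha_lo_t_iff[OF assms(1)] alpha_gamma_congruence[OF assms(2)] ..

lemma beta_t_Inter:
  assumes "lts X A T" and "C \<noteq> {}" and "\<forall>R\<in>C. congruence X R"
  shows "beta_t X A T (\<Inter>C) = (\<Inter>R\<in>C. beta_t X A T R)"
proof -
  have "(X1, X2) \<in> beta_t X A T (\<Inter>C) \<longleftrightarrow> (\<forall>R\<in>C. (X1, X2) \<in> beta_t X A T R)" for X1 X2
    using mem_beta_t_iff[OF assms(1)] congruence_Inter[OF assms(2,3)] assms(2,3) by auto
  then show ?thesis by auto
qed

theorem mainTheorem12:
  fixes X :: "'x set" and A :: "'a set" and T :: "('x \<times> 'a \<times> 'x) set"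
  assumes "lts X A T"
  shows "(\<forall>R X1 X2. congruence X R \<longrightarrow> X1 \<subseteq> X \<longrightarrow> X2 \<subseteq> X \<longrightarrow>
            ((X1, X2) \<in> beta_t X A T R \<longleftrightarrow>
              ((X1 = {} \<longleftrightarrow> X2 = {}) \<and> (\<forall>a\<in>A. (delta T a X1, delta T a X2) \<in> R))))
       \<and> (\<forall>C. C \<noteq> {} \<longrightarrow> wo_chain_sup C \<longrightarrow> (\<forall>R\<in>C. congruence X R) \<longrightarrow>
            beta_t X A T (\<Inter>C) = (\<Inter>R\<in>C. beta_t X A T R))"
  using mem_beta_t_iff[OF assms] beta_t_Inter[OF assms] by simp

end
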